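(* Fix $n<\omega$ and assume that for every finite quasi-order $P$ the quasi-order $i^F_{\omega^n}(P)$ is a well-quasi-order. Then for every quasi-order $Q$ the following hold. (1) Every $\sigma\in s^F_{=\omega^n}(Q)$ either lies in $i^F_{=\omega^n}(Q)$, or can be written as a concatenation $\sigma=\sigma_0+\sigma_1$ with $\sigma_0\in s^F_{\omega^n}(Q)$ and $\sigma_1\in i^F_{=\omega^n}(Q)$. (2) Every $\sigma\in s^F_{\omega^{n+1}}(Q)$ can be written as a finite concatenation $\sigma_0+\sigma_1+\cdots+\sigma_{k-1}$ with $\sigma_i\in i^F_{\omega^{n+1}}(Q)$ for all $i<k$.
   Context: A well-quasi-order is a quasi-order in which every infinite sequence $(x_i)_{i<\omega}$ has $i<j$ with $x_i\le x_j$. Sequences: a transfinite sequence over $Q$ of length $\alpha$ (with $\alpha\ne0$ an ordinal) is a function $\sigma:\alpha\to Q$, and $|\sigma|=\alpha$; the empty sequence is excluded. Define $\sigma\preceq\tau$ if there is a strictly increasing $f:|\sigma|\to|\tau|$ with $\sigma(i)\le_Q\tau(f(i))$ for all $i$. The concatenation $\sigma+\tau$ has length $|\sigma|+|\tau|$: it equals $\sigma(\iota)$ for $\iota<|\sigma|$ and $\tau(-|\sigma|+\iota)$ for $|\sigma|\le\iota<|\sigma|+|\tau|$. Finite range means the sequence takes finitely many values. A proper tail of $\sigma$ is $i\mapsto\sigma(\delta+i)$ for some $0<\delta<|\sigma|$. The sequence $\sigma$ is indecomposable if it embeds into each of its proper tails. Notation: - $s^F_\alpha(Q)$: finite-range sequences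 of length $<\alpha$; - $i^F_\alpha(Q)$: the indecomposable elements of $s^F_\alpha(Q)$; - $s^F_{=\alpha}(Q)$ and $i^F_{=\alpha}(Q)$: the sequences of length exactly $\alpha$ in $s^F_{\alpha+1}(Q)$ and $i^F_{\alpha+1}(Q)$, respectively. All are ordered by $\preceq$. *)

theory Defs
  imports Main "HOL-Library.Multiset_Order"
begin

text \<open>An ordinal below omega^omega is represented by its Cantor normal form
  omega^e1 + ... + omega^ek (e1 >= ... >= ek), i.e. by the finite multiset
  of exponents {e1,...,ek}.  The multiset order (Multiset_Order) is exactly
  the ordinal order on these normal forms; the empty multiset is 0.\<close>

type_synonym ord = "nat multiset"

definition oomega :: "nat \<Rightarrow> ord"
  where "oomega n = {#n#}"

definition oadd :: "ord \<Rightarrow> ord \<Rightarrow> ord"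
  where "oadd a b = (if b = {#} then a else filter_mset (\<lambda>e. Max_mset b \<le> e) a + b)"

definition osub :: "ord \<Rightarrow> ord \<Rightarrow> ord"
  where "osub d a = (THE g. oadd d g = a)"

text \<open>A transfinite sequence is a pair (length, values); only the values at
  indices below the length are relevant.\<close>

type_synonym 'q tseq = "ord \<times> (ord \<Rightarrow> 'q)"

definition seqs_over :: "'q set \<Rightarrow> 'q tseq set" where
  "seqs_over P = {s. fst s \<noteq> 0 \<and> (\<forall>i < fst s. snd s i \<in> P)}"

definition seq_eq :: "'q tseq \<Rightarrow> 'q tseq \<Rightarrow> bool" where
  "seq_eq s t \<longleftrightarrow> fst s = fst t \<and> (\<forall>i < fst s. snd s i = snd t i)"

definition emb :: "('q \<Rightarrow> 'q \<Rightarrow> bool) \<Rightarrow> 'q tseq \<Rightarrow> 'q tseq \<Rightarrow> bool" where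
  "emb le s t \<longleftrightarrow> (\<exists>f::ord \<Rightarrow> ord.
      (\<forall>i j. i < j \<and> j < fst s \<longrightarrow> f i < f j) \<and>
      (\<forall>i < fst s. f i < fst t \<and> le (snd s i) (snd t (f i))))"

definition finite_range :: "'q tseq \<Rightarrow> bool" where
  "finite_range s \<longleftrightarrow> finite (snd s ` {i. i < fst s})"

definition concat :: "'q tseq \<Rightarrow> 'q tseq \<Rightarrow> 'q tseq" where
  "concat s t = (oadd (fst s) (fst t),
     \<lambda>i. if i < fst s then snd s i else snd t (osub (fst s) i))"

fun concat_list :: "'q tseq list \<Rightarrow> 'q tseq" where
  "concat_list [] = undefined"
| "concat_list [s] = s"
| "concat_list (s # ss) = concat s (concat_list ss)"

definition tail :: "ord \<Rightarrow> 'q tseq \<Rightarrow> 'q tseq" where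
  "tail d s = (osub d (fst s), \<lambda>i. snd s (oadd d i))"

definition indecomposable :: "('q \<Rightarrow> 'q \<Rightarrow> bool) \<Rightarrow> 'q tseq \<Rightarrow> bool" where
  "indecomposable le s \<longleftrightarrow> (\<forall>d. 0 < d \<and> d < fst s \<longrightarrow> emb le s (tail d s))"

definition sF :: "'q set \<Rightarrow> ord \<Rightarrow> 'q tseq set" where
  "sF P a = {s \<in> seqs_over P. fst s < a \<and> finite_range s}"

definition iF :: "('q \<Rightarrow> 'q \<Rightarrow> bool) \<Rightarrow> 'q set \<Rightarrow> ord \<Rightarrow> 'q tseq set" where
  "iF le P a = {s \<in> sF P a. indecomposable le s}"

definition sF_eq :: "'q set \<Rightarrow> ord \<Rightarrow> 'q tseq set" where
  "sF_eq P a = {s \<in> seqs_over P. fst s = a \<and> finite_range s}"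

definition iF_eq :: "('q \<Rightarrow> 'q \<Rightarrow> bool) \<Rightarrow> 'q set \<Rightarrow> ord \<Rightarrow> 'q tseq set" where
  "iF_eq le P a = {s \<in> sF_eq P a. indecomposable le s}"

definition qo_on :: "'a set \<Rightarrow> ('a \<Rightarrow> 'a \<Rightarrow> bool) \<Rightarrow> bool" where
  "qo_on P le \<longleftrightarrow> (\<forall>x\<in>P. le x x) \<and> (\<forall>x\<in>P. \<forall>y\<in>P. \<forall>z\<in>P. le x y \<longrightarrow> le y z \<longrightarrow> le x z)"

definition wqo_on :: "'a set \<Rightarrow> ('a \<Rightarrow> 'a \<Rightarrow> bool) \<Rightarrow> bool" where
  "wqo_on S le \<longleftrightarrow> qo_on S le \<and>
     (\<forall>x::nat \<Rightarrow> 'a. (\<forall>i. x i \<in> S) \<longrightarrow> (\<exists>i j. i < j \<and> le (x i) (x j)))"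

end

theory Submission
  imports Defs
begin

text \<open>Sequences are handled as total functions \<sigma> on ordinals, with segments [a, b) given by
  seg \<sigma> a b. For m \<le> n two statements are proved by induction on m: every \<sigma> of finite range
  has an indecomposable final segment [c, omega^m) (has_indec_tail), and for 0 < \<gamma> < omega^(m+1)
  every [0, \<gamma>) is a finite concatenation of indecomposable segments (indec_decomposable).
  Claims (1) and (2) are these statements for m = n.

  The second statement follows from the first and from the second for omega^m: \<gamma> is a sum of
  copies of omega^m and a rest below omega^m, and [0, omega^m) = [0, c) + [c, omega^m).
  For the first statement at omega^(m+1), decomposing the blocks [omega^m k, omega^m (k+1))
  cuts [0, omega^(m+1)) into an omega-sequence of indecomposable pieces of length below
  omega^(m+1) whose values lie in the finite range of \<sigma>. By the hypothesis no subsequence of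
  them is bad, so from some piece N on every piece embeds into pieces arbitrarily far out.
  Embedding the pieces from the N-th on into pieces beyond a given point, one after the other,
  embeds the final segment starting at the N-th piece into each of its tails.\<close>

section \<open>Ordinal arithmetic on Cantor normal forms\<close>

lemma oadd_0_right [simp]: "oadd a 0 = a"
  by (simp add: oadd_def)

lemma oadd_0_left [simp]: "oadd 0 b = b"
  by (simp add: oadd_def)

lemma oadd_nonzero: "b \<noteq> 0 \<Longrightarrow> oadd a b = filter_mset (\<lambda>e. Max_mset b \<le> e) a + b"
  unfolding oadd_def by (rule if_not_P)

lemma less_oadd_self:
  assumes "b \<noteq> 0"
  shows "a < oadd a b"
proof -
  define e where "e = Max_mset b"
  have "e \<in># b" using assms e_def by simp
  then have "filter_mset (\<lambda>x. \<not> e \<le> x) a < b"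
    by (intro ex_gt_imp_less_multiset exI[of _ e]) auto
  then have "a < filter_mset (\<lambda>x. e \<le> x) a + b"
    by (metis add_less_cancel_left multiset_partition)
  then show ?thesis using oadd_nonzero[OF assms, of a, folded e_def] by simp
qed

lemma oadd_strict_mono:
  assumes "b < b'"
  shows "oadd a b < oadd a b'"
proof (cases "b = 0")
  case True
  then show ?thesis using assms less_oadd_self[of b' a] by auto
next
  case False
  then have nz: "b' \<noteq> 0" using assms by auto
  define e where "e = Max_mset b"
  define e' where "e' = Max_mset b'"
  have ein: "e \<in># b" using False e_def by simp
  have ein': "e' \<in># b'" using nz e'_def by simp
  have "e \<le> e'"
  proof (rule ccontr)
    assume "\<not> e \<le> e'"
    then have "b' < b"
      using ein e'_def
      by (metis ex_gt_imp_less_multiset Max_ge finite_set_mset not_le order_le_less_trans)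
    then show False using assms by simp
  qed
  show ?thesis
  proof (cases "e = e'")
    case True
    then show ?thesis using oadd_nonzero[OF False, of a] oadd_nonzero[OF nz, of a] e_def e'_def assms by simp
  next
    case ne: False
    have split: "filter_mset (\<lambda>x. e \<le> x) a
        = filter_mset (\<lambda>x. e' \<le> x) a + filter_mset (\<lambda>x. e \<le> x \<and> x < e') a"
      by (rule multiset_eqI) (use \<open>e \<le> e'\<close> in auto)
    have "filter_mset (\<lambda>x. e \<le> x \<and> x < e') a + b < b'"
      using ein' \<open>e \<le> e'\<close> ne e_def
      by (intro ex_gt_imp_less_multiset exI[of _ e']) (auto simp del: Max_le_iff dest!: Max_ge[OF finite_set_mset])
    then show ?thesis
      using oadd_nonzero[OF False, of a] oadd_nonzero[OF nz, of a] e_def e'_def split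
      by (simp add: add.assoc)
  qed
qed

lemma Max_mset_oadd:
  assumes "b \<noteq> 0" "c \<noteq> 0"
  shows "Max_mset (oadd b c) = max (Max_mset b) (Max_mset c)"
proof -
  have S: "set_mset (oadd b c) = {x \<in> set_mset b. Max_mset c \<le> x} \<union> set_mset c"
    using assms by (auto simp: oadd_nonzero)
  show ?thesis unfolding S
  proof (rule Max_eqI)
    fix y assume "y \<in> {x \<in> set_mset b. Max_mset c \<le> x} \<union> set_mset c"
    then show "y \<le> max (Max_mset b) (Max_mset c)"
      by (auto simp del: Max_le_iff intro: le_max_iff_disj[THEN iffD2])
  next
    show "max (Max_mset b) (Max_mset c) \<in> {x \<in> set_mset b. Max_mset c \<le> x} \<union> set_mset c"
      using assms by (cases "Max_mset c \<le> Max_mset b") (auto simp: max_def simp del: Max_le_iff)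
  qed simp
qed

lemma oadd_assoc: "oadd (oadd a b) c = oadd a (oadd b c)"
proof (cases "b = 0 \<or> c = 0")
  case True
  then show ?thesis by auto
next
  case False
  then have "b \<noteq> 0" "c \<noteq> 0" "oadd b c \<noteq> 0" by (auto simp: oadd_nonzero)
  then show ?thesis
    using Max_mset_oadd[of b c]
    by (simp add: oadd_nonzero, intro multiset_eqI) (auto simp: max_def)
qed

lemma oadd_less_iff [simp]: "oadd a b < oadd a b' \<longleftrightarrow> b < b'"
  by (metis oadd_strict_mono linorder_not_less order_less_asym' order_le_less)

lemma oadd_le_iff [simp]: "oadd a b \<le> oadd a b' \<longleftrightarrow> b \<le> b'"
  by (meson linorder_not_less oadd_less_iff)

lemma oadd_cancel [simp]: "oadd a b = oadd a b' \<longleftrightarrow> b = b'"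
  by (metis linorder_neqE oadd_less_iff order_less_irrefl)

lemma oadd_ge_left: "a \<le> oadd a b"
  using oadd_le_iff[of a 0 b] by simp

lemma less_oadd: "i < a \<Longrightarrow> i < oadd a b"
  using oadd_ge_left order_less_le_trans by blast

lemma oadd_ge_right: "b \<le> oadd a b"
  by (cases "b = 0") (auto simp: oadd_nonzero)

text \<open>The difference is read off the largest exponent e at which a and c differ:
  it consists of the surplus copies of e in c followed by the part of c below e.\<close>

lemma oadd_exists:
  assumes "a \<le> c"
  shows "\<exists>b. oadd a b = c"
proof (cases "a = c")
  case True
  then show ?thesis by (intro exI[of _ 0]) simp
next
  case False
  with assms have lt: "a < c" by simp
  define D where "D = {x. count a x \<noteq> count c x}"
  have "finite D"
    by (rule finite_subset[of _ "set_mset a \<union> set_mset c"])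
      (auto simp: D_def count_eq_zero_iff[symmetric] simp del: count_eq_zero_iff)
  moreover have "D \<noteq> {}" using False by (auto simp: D_def multiset_eq_iff)
  ultimately have eD: "Max D \<in> D" by simp
  define e where "e = Max D"
  have above: "count a x = count c x" if "e < x" for x
    using that \<open>finite D\<close> e_def D_def Max_ge by fastforce
  have ce: "count a e < count c e"
  proof -
    have "\<not> count c e < count a e"
    proof
      assume "count c e < count a e"
      then obtain x where "x > e" "count a x < count c x"
        using lt unfolding less_multiset\<^sub>H\<^sub>O by blast
      then show False using above by fastforce
    qed
    then show ?thesis using eD D_def e_def by simp
  qed
  define b where "b = replicate_mset (count c e - count a e) e + filter_mset (\<lambda>x. x < e) c"
  have bnz: "b \<noteq> 0" using ce by (simp add: b_def)
  have "Max_mset b = e"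
    using ce by (intro Max_eqI) (auto simp: b_def)
  then have "oadd a b = c"
    unfolding oadd_nonzero[OF bnz]
    by (intro multiset_eqI) (use above ce in \<open>auto simp: b_def not_le\<close>)
  then show ?thesis by blast
qed

lemma osub_eqI: "oadd d g = a \<Longrightarrow> osub d a = g"
  unfolding osub_def by (rule the_equality) auto

lemma osub_oadd [simp]: "osub d (oadd d g) = g"
  by (rule osub_eqI) simp

lemma osub_0_left [simp]: "osub 0 a = a"
  by (rule osub_eqI) simp

lemma oadd_osub: "d \<le> a \<Longrightarrow> oadd d (osub d a) = a"
  using oadd_exists osub_eqI by metis

lemma osub_less_iff: "d \<le> i \<Longrightarrow> osub d i < b \<longleftrightarrow> i < oadd d b"
  by (metis oadd_osub oadd_less_iff)

lemma less_osub_iff: "a \<le> b \<Longrightarrow> x < osub a b \<longleftrightarrow> oadd a x < b"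
  by (metis oadd_osub oadd_less_iff)

lemma osub_strict_mono: "d \<le> u \<Longrightarrow> u < v \<Longrightarrow> osub d u < osub d v"
  by (metis oadd_osub oadd_less_iff order.strict_trans1 order_less_imp_le)

lemma osub_le: "d \<le> a \<Longrightarrow> osub d a \<le> a"
  by (metis oadd_osub oadd_ge_right)

lemma osub_pos: "d < a \<Longrightarrow> 0 < osub d a"
  by (metis oadd_0_right oadd_osub order_less_imp_le order_less_irrefl le_multiset_empty_left)

lemma oadd_less_omega: "a < oomega m \<Longrightarrow> b < oomega m \<Longrightarrow> oadd a b < oomega m"
  by (cases "b = 0") (auto simp: oadd_nonzero oomega_def)

lemma osub_omega: "d < oomega m \<Longrightarrow> osub d (oomega m) = oomega m"
  by (intro osub_eqI multiset_eqI) (auto simp: oadd_nonzero oomega_def not_in_iff[symmetric])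

lemma oadd_replicate_mset_omega: "oadd (replicate_mset k m) (oomega m) = replicate_mset (Suc k) m"
proof -
  have "filter_mset ((\<le>) m) (replicate_mset k m) = replicate_mset k m" by (induction k) auto
  then show ?thesis by (simp add: oadd_nonzero oomega_def)
qed

lemma replicate_mset_less_omega_Suc: "replicate_mset k m < oomega (Suc m)"
  by (auto simp: oomega_def intro!: ex_gt_imp_less_multiset)

lemma less_omega_Suc_imp_less_replicate_mset:
  assumes "\<alpha> < oomega (Suc m)"
  shows "\<alpha> < replicate_mset (Suc (size \<alpha>)) m"
proof -
  have "\<forall>a\<in>#\<alpha>. a \<le> m" using assms by (auto simp: oomega_def less_Suc_eq_le)
  then have "\<alpha> \<le> replicate_mset (size \<alpha>) m"
  proof (induction \<alpha>)
    case (add a \<alpha>)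
    then show ?case by (simp add: add_mset_le_le_le)
  qed simp
  then show ?thesis using le_multiset_right_total by (simp add: order.strict_trans1)
qed

definition seg :: "(ord \<Rightarrow> 'q) \<Rightarrow> ord \<Rightarrow> ord \<Rightarrow> 'q tseq" where
  "seg \<sigma> a b = (osub a b, \<lambda>x. \<sigma> (oadd a x))"

lemma seg_0: "seg \<sigma> 0 b = (b, \<sigma>)"
  by (simp add: seg_def)

lemma fst_seg_omega: "c < oomega m \<Longrightarrow> fst (seg \<sigma> c (oomega m)) = oomega m"
  by (simp add: seg_def osub_omega)

lemma finite_range_seg: "finite (range \<sigma>) \<Longrightarrow> finite_range (seg \<sigma> a b)"
  unfolding finite_range_def seg_def by (rule finite_subset[of _ "range \<sigma>"]) auto

lemma seg_shift:
  assumes "a \<le> b"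
  shows "seg (\<lambda>x. \<sigma> (oadd d x)) a b = seg \<sigma> (oadd d a) (oadd d b)"
proof -
  have "osub (oadd d a) (oadd d b) = osub a b"
    by (rule osub_eqI) (simp add: oadd_assoc oadd_osub assms)
  then show ?thesis by (simp add: seg_def oadd_assoc)
qed

lemma tail_seg:
  assumes "c \<le> b" "oadd c d \<le> b"
  shows "tail d (seg \<sigma> c b) = seg \<sigma> (oadd c d) b"
proof -
  have "d \<le> osub c b" using assms by (metis oadd_le_iff oadd_osub)
  then have "osub d (osub c b) = osub (oadd c d) b"
    by (metis assms(1) oadd_assoc oadd_osub osub_eqI)
  then show ?thesis by (simp add: tail_def seg_def oadd_assoc)
qed

lemma seq_eq_refl [simp]: "seq_eq s s"
  by (simp add: seq_eq_def)

lemma seq_eq_sym: "seq_eq s t \<Longrightarrow> seq_eq t s"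
  by (simp add: seq_eq_def)

lemma seq_eq_trans [trans]: "seq_eq s t \<Longrightarrow> seq_eq t u \<Longrightarrow> seq_eq s u"
  by (simp add: seq_eq_def)

lemma concat_cong:
  assumes "seq_eq s s'" "seq_eq t t'"
  shows "seq_eq (concat s t) (concat s' t')"
proof -
  have "fst s = fst s'" "fst t = fst t'" "\<forall>i < fst s. snd s i = snd s' i" "\<forall>i < fst t. snd t i = snd t' i"
    using assms by (auto simp: seq_eq_def)
  then show ?thesis
    by (auto simp: seq_eq_def concat_def osub_less_iff not_less)
qed

lemma concat_assoc: "seq_eq (concat (concat s t) u) (concat s (concat t u))"
  unfolding seq_eq_def
proof (intro conjI allI impI)
  show "fst (concat (concat s t) u) = fst (concat s (concat t u))"
    by (simp add: concat_def oadd_assoc)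
  fix i assume "i < fst (concat (concat s t) u)"
  show "snd (concat (concat s t) u) i = snd (concat s (concat t u)) i"
  proof (cases "i < fst s")
    case True
    then show ?thesis by (simp add: concat_def less_oadd)
  next
    case False
    define j where "j = osub (fst s) i"
    have i: "i = oadd (fst s) j" using False by (simp add: j_def oadd_osub)
    have "osub (oadd (fst s) (fst t)) i = osub (fst t) j" if "\<not> j < fst t"
      using that by (intro osub_eqI) (simp add: i oadd_assoc oadd_osub)
    then show ?thesis by (simp add: concat_def i leD[OF oadd_ge_left])
  qed
qed

lemma concat_list_Cons: "ss \<noteq> [] \<Longrightarrow> concat_list (s # ss) = concat s (concat_list ss)"
  by (cases ss) auto

lemma concat_list_append:
  "ss \<noteq> [] \<Longrightarrow> ts \<noteq> [] \<Longrightarrow> seq_eq (concat_list (ss @ ts)) (concat (concat_list ss) (concat_list ts))"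
proof (induction ss rule: concat_list.induct)
  case (3 s s' ss)
  have "seq_eq (concat_list ((s # s' # ss) @ ts)) (concat s (concat (concat_list (s' # ss)) (concat_list ts)))"
    using 3 by (simp add: concat_list_Cons concat_cong del: concat_list.simps)
  also have "seq_eq \<dots> (concat (concat s (concat_list (s' # ss))) (concat_list ts))"
    by (rule seq_eq_sym[OF concat_assoc])
  finally show ?case by (simp add: concat_list_Cons del: concat_list.simps)
qed (simp_all add: concat_list_Cons)

lemma seg_concat:
  assumes "a \<le> b" "b \<le> c"
  shows "seq_eq (seg \<sigma> a c) (concat (seg \<sigma> a b) (seg \<sigma> b c))"
proof -
  have b: "b = oadd a (osub a b)" using assms by (simp add: oadd_osub)
  have "osub a c = oadd (osub a b) (osub b c)"
    by (rule osub_eqI) (metis assms b oadd_assoc oadd_osub)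
  moreover have "oadd b (osub (osub a b) i) = oadd a i" if "\<not> i < osub a b" for i
    using that by (metis b oadd_assoc oadd_osub not_less)
  ultimately show ?thesis
    by (simp add: seq_eq_def seg_def concat_def)
qed

lemma emb_cong:
  assumes "seq_eq s s'" "seq_eq t t'" "emb le s t"
  shows "emb le s' t'"
proof -
  obtain f where "\<forall>i j. i < j \<and> j < fst s \<longrightarrow> f i < f j"
    "\<forall>i < fst s. f i < fst t \<and> le (snd s i) (snd t (f i))"
    using assms(3) unfolding emb_def by blast
  then show ?thesis
    using assms(1,2) unfolding emb_def seq_eq_def by (intro exI[of _ f]) auto
qed

lemma tail_cong:
  assumes "seq_eq s s'" "d \<le> fst s"
  shows "seq_eq (tail d s) (tail d s')"
  using assms by (simp add: seq_eq_def tail_def less_osub_iff)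

lemma indecomposable_cong:
  assumes "seq_eq s t" "indecomposable le s"
  shows "indecomposable le t"
  unfolding indecomposable_def
proof (intro allI impI)
  fix d assume d: "0 < d \<and> d < fst t"
  have "fst s = fst t" using assms by (simp add: seq_eq_def)
  then have "emb le s (tail d s)" "seq_eq (tail d s) (tail d t)"
    using assms d by (simp_all add: indecomposable_def tail_cong order_less_imp_le)
  then show "emb le t (tail d t)" using emb_cong assms(1) by blast
qed

lemma emb_seg_index_map:
  assumes "emb le (seg \<sigma> a b) (seg \<tau> a' b')" "a \<le> b" "a' \<le> b'"
  shows "\<exists>F. (\<forall>y y'. a \<le> y \<longrightarrow> y < y' \<longrightarrow> y' < b \<longrightarrow> F y < F y') \<and>
    (\<forall>y. a \<le> y \<longrightarrow> y < b \<longrightarrow> a' \<le> F y \<and> F y < b' \<and> le (\<sigma> y) (\<tau> (F y)))"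
proof -
  obtain f where f_mono: "\<And>i j. i < j \<Longrightarrow> j < osub a b \<Longrightarrow> f i < f j"
    and f_maps: "\<And>i. i < osub a b \<Longrightarrow> f i < osub a' b' \<and> le (\<sigma> (oadd a i)) (\<tau> (oadd a' (f i)))"
    using assms(1) unfolding emb_def seg_def fst_conv snd_conv by blast
  define F where "F y = oadd a' (f (osub a y))" for y
  have "F y < F y'" if "a \<le> y" "y < y'" "y' < b" for y y'
  proof -
    have "a \<le> y'" using that by simp
    then have "osub a y < osub a y'" "osub a y' < osub a b"
      using that by (simp_all add: osub_strict_mono)
    then show ?thesis using f_mono by (simp add: F_def)
  qed
  moreover have "a' \<le> F y \<and> F y < b' \<and> le (\<sigma> y) (\<tau> (F y))" if "a \<le> y" "y < b" for y
  proof -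
    have "osub a y < osub a b" using that by (rule osub_strict_mono)
    then have "F y < b'" "le (\<sigma> y) (\<tau> (F y))"
      using f_maps[of "osub a y"] assms(3) that(1) by (simp_all add: F_def less_osub_iff oadd_osub)
    then show ?thesis by (simp add: F_def oadd_ge_left)
  qed
  ultimately show ?thesis by blast
qed

lemma emb_segI:
  assumes "a \<le> b" "a' \<le> b'"
    and mono: "\<And>y y'. a \<le> y \<Longrightarrow> y < y' \<Longrightarrow> y' < b \<Longrightarrow> F y < F y'"
    and maps: "\<And>y. a \<le> y \<Longrightarrow> y < b \<Longrightarrow> a' \<le> F y \<and> F y < b' \<and> le (\<sigma> y) (\<tau> (F y))"
  shows "emb le (seg \<sigma> a b) (seg \<tau> a' b')"
  unfolding emb_def seg_def fst_conv snd_conv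
proof (intro exI[of _ "\<lambda>i. osub a' (F (oadd a i))"] conjI allI impI)
  fix i j assume "i < j \<and> j < osub a b"
  then have "oadd a i < oadd a j" "oadd a j < b"
    using assms(1) by (simp_all add: less_osub_iff)
  then have "F (oadd a i) < F (oadd a j)" "a' \<le> F (oadd a i)"
    using mono maps oadd_ge_left[of a] order.strict_trans by blast+
  then show "osub a' (F (oadd a i)) < osub a' (F (oadd a j))"
    by (simp add: osub_strict_mono)
next
  fix i assume "i < osub a b"
  then have "oadd a i < b" using assms(1) by (simp add: less_osub_iff)
  then have "a' \<le> F (oadd a i) \<and> F (oadd a i) < b' \<and> le (\<sigma> (oadd a i)) (\<tau> (F (oadd a i)))"
    using maps oadd_ge_left by blast
  then show "osub a' (F (oadd a i)) < osub a' b'"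
    and "le (\<sigma> (oadd a i)) (\<tau> (oadd a' (osub a' (F (oadd a i)))))"
    by (simp_all add: osub_strict_mono oadd_osub)
qed

section \<open>Finite sums of indecomposable segments\<close>

inductive indec_sum :: "('q \<Rightarrow> 'q \<Rightarrow> bool) \<Rightarrow> (ord \<Rightarrow> 'q) \<Rightarrow> ord \<Rightarrow> ord \<Rightarrow> bool"
  for le \<sigma> where
  single: "a < b \<Longrightarrow> indecomposable le (seg \<sigma> a b) \<Longrightarrow> indec_sum le \<sigma> a b"
| trans: "indec_sum le \<sigma> a b \<Longrightarrow> indec_sum le \<sigma> b c \<Longrightarrow> indec_sum le \<sigma> a c"

lemma indec_sum_less: "indec_sum le \<sigma> a b \<Longrightarrow> a < b"
  by (induction rule: indec_sum.induct) auto

lemma indec_sum_shift: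
  "indec_sum le (\<lambda>x. \<sigma> (oadd d x)) a b \<Longrightarrow> indec_sum le \<sigma> (oadd d a) (oadd d b)"
proof (induction rule: indec_sum.induct)
  case (single a b)
  then show ?case by (intro indec_sum.single) (simp_all add: seg_shift)
next
  case (trans a b c)
  then show ?case by (blast intro: indec_sum.trans)
qed

lemma indec_sum_concat_list:
  "indec_sum le \<sigma> a b \<Longrightarrow> \<exists>ss. ss \<noteq> [] \<and>
     (\<forall>t\<in>set ss. \<exists>c d. a \<le> c \<and> c < d \<and> d \<le> b \<and> t = seg \<sigma> c d \<and> indecomposable le t) \<and>
     seq_eq (seg \<sigma> a b) (concat_list ss)"
proof (induction rule: indec_sum.induct)
  case (single a b)
  then show ?case by (intro exI[of _ "[seg \<sigma> a b]"]) auto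
next
  case (trans a b c)
  from trans.IH obtain ss ts where "ss \<noteq> []" "ts \<noteq> []"
    and ss: "\<forall>t\<in>set ss. \<exists>c d. a \<le> c \<and> c < d \<and> d \<le> b \<and> t = seg \<sigma> c d \<and> indecomposable le t"
    and ts: "\<forall>t\<in>set ts. \<exists>c' d. b \<le> c' \<and> c' < d \<and> d \<le> c \<and> t = seg \<sigma> c' d \<and> indecomposable le t"
    and "seq_eq (seg \<sigma> a b) (concat_list ss)" "seq_eq (seg \<sigma> b c) (concat_list ts)"
    by blast
  have "a < b" "b < c" using trans.hyps indec_sum_less by blast+
  then have "seq_eq (seg \<sigma> a c) (concat (seg \<sigma> a b) (seg \<sigma> b c))"
    by (intro seg_concat) auto
  also have "seq_eq \<dots> (concat (concat_list ss) (concat_list ts))"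
    by (intro concat_cong) fact+
  also have "seq_eq \<dots> (concat_list (ss @ ts))"
    using \<open>ss \<noteq> []\<close> \<open>ts \<noteq> []\<close> by (intro seq_eq_sym[OF concat_list_append])
  finally have "seq_eq (seg \<sigma> a c) (concat_list (ss @ ts))" .
  moreover have "\<exists>c' d. a \<le> c' \<and> c' < d \<and> d \<le> c \<and> t = seg \<sigma> c' d \<and> indecomposable le t"
    if "t \<in> set (ss @ ts)" for t
  proof -
    from that consider "t \<in> set ss" | "t \<in> set ts" by auto
    then show ?thesis
    proof cases
      case 1
      with ss \<open>b < c\<close> show ?thesis by (meson order.strict_implies_order order.trans)
    next
      case 2
      with ts \<open>a < b\<close> show ?thesis by (meson order.strict_implies_order order.trans)
    qed
  qed
  ultimately show ?case using \<open>ss \<noteq> []\<close> by (intro exI[of _ "ss @ ts"]) auto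
qed

lemma indec_sum_chain:
  "indec_sum le \<sigma> a b \<Longrightarrow> \<exists>r f. 0 < r \<and> f 0 = a \<and> f r = b \<and>
     (\<forall>i<r. f i < f (Suc i) \<and> indecomposable le (seg \<sigma> (f i) (f (Suc i))))"
proof (induction rule: indec_sum.induct)
  case (single a b)
  then show ?case by (intro exI[of _ 1] exI[of _ "\<lambda>i. if i = 0 then a else b"]) auto
next
  case (trans a b c)
  from trans.IH obtain r f r' f' where
    "0 < r" "f 0 = a" "f r = b" "\<forall>i<r. f i < f (Suc i) \<and> indecomposable le (seg \<sigma> (f i) (f (Suc i)))"
    "0 < r'" "f' 0 = b" "f' r' = c" "\<forall>i<r'. f' i < f' (Suc i) \<and> indecomposable le (seg \<sigma> (f' i) (f' (Suc i)))"
    by blast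
  define g where "g i = (if i \<le> r then f i else f' (i - r))" for i
  have "g i < g (Suc i) \<and> indecomposable le (seg \<sigma> (g i) (g (Suc i)))" if "i < r + r'" for i
  proof (cases "i < r")
    case True
    then show ?thesis using \<open>\<forall>i<r. _\<close> by (simp add: g_def)
  next
    case False
    then have "g i = f' (i - r)" "g (Suc i) = f' (Suc (i - r))"
      using \<open>f r = b\<close> \<open>f' 0 = b\<close> by (auto simp: g_def Suc_diff_le)
    then show ?thesis using \<open>\<forall>i<r'. _\<close> that False by simp
  qed
  then show ?case
    using \<open>0 < r\<close> \<open>f 0 = a\<close> \<open>f' 0 = b\<close> \<open>f' r' = c\<close> \<open>f r = b\<close>
    by (intro exI[of _ "r + r'"] exI[of _ g]) (auto simp: g_def)
qed

lemma chain_less_last: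
  assumes "\<forall>i<r. (f :: nat \<Rightarrow> 'a :: order) i < f (Suc i)" "i < r"
  shows "f i < f r"
  using assms
proof (induction r)
  case (Suc r)
  then show ?case by (cases "i = r") (auto intro: order.strict_trans)
qed simp

text \<open>Position (block, index inside the block) of the j-th step when the blocks
  0, 1, 2, ... of lengths r 0, r 1, ... are traversed one after the other.\<close>

fun block_pos :: "(nat \<Rightarrow> nat) \<Rightarrow> nat \<Rightarrow> nat \<times> nat" where
  "block_pos r 0 = (0, 0)"
| "block_pos r (Suc j) = (case block_pos r j of (k, i) \<Rightarrow>
     if Suc i < r k then (k, Suc i) else (Suc k, 0))"

lemma block_pos_less: "(\<And>k. 0 < r k) \<Longrightarrow> snd (block_pos r j) < r (fst (block_pos r j))"
  by (induction j) (auto split: prod.splits)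

lemma block_pos_start: "(\<And>k. 0 < r k) \<Longrightarrow> \<exists>j. block_pos r j = (k, 0)"
proof (induction k)
  case 0
  show ?case by (rule exI[of _ 0]) simp
next
  case (Suc k)
  then obtain j where j: "block_pos r j = (k, 0)" by blast
  have "block_pos r (j + i) = (k, i)" if "i < r k" for i
    using that by (induction i) (auto simp: j)
  moreover obtain i where "r k = Suc i" using Suc.prems by (metis gr0_conv_Suc)
  ultimately have "block_pos r (Suc (j + i)) = (Suc k, 0)" by simp
  then show ?case by blast
qed

lemma concat_chains:
  fixes f :: "nat \<Rightarrow> nat \<Rightarrow> 'a"
  assumes "\<And>k. 0 < r k" "\<And>k. f k (r k) = f (Suc k) 0"
  shows "\<exists>p. p 0 = f 0 0 \<and> (\<forall>k. \<exists>j. p j = f k 0) \<and>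
    (\<forall>j. \<exists>k i. i < r k \<and> p j = f k i \<and> p (Suc j) = f k (Suc i))"
proof -
  define p where "p j = (case block_pos r j of (k, i) \<Rightarrow> f k i)" for j
  have "\<exists>k i. i < r k \<and> p j = f k i \<and> p (Suc j) = f k (Suc i)" for j
  proof -
    obtain k i where ki: "block_pos r j = (k, i)" by fastforce
    then have "i < r k" using block_pos_less[where r = r and j = j, OF assms(1)] by simp
    moreover have "p (Suc j) = f k (Suc i)"
    proof (cases "Suc i < r k")
      case False
      then have "Suc i = r k" using \<open>i < r k\<close> by simp
      then show ?thesis using ki False assms(2)[of k] by (simp add: p_def)
    qed (simp add: ki p_def)
    ultimately show ?thesis using ki by (auto simp: p_def)
  qed
  moreover have "\<exists>j. p j = f k 0" for k
    using block_pos_start[where r = r and k = k, OF assms(1)] by (metis case_prod_conv p_def)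
  ultimately show ?thesis by (intro exI[of _ p]) (auto simp: p_def)
qed

lemma indec_sum_sequence:
  assumes "\<And>k. indec_sum le \<sigma> (B k) (B (Suc k))"
  shows "\<exists>p. strict_mono p \<and> p 0 = B 0 \<and> (\<forall>k. \<exists>j. p j = B k) \<and> (\<forall>j. \<exists>k. p j < B k) \<and>
    (\<forall>j. indecomposable le (seg \<sigma> (p j) (p (Suc j))))"
proof -
  obtain r f where r: "\<And>k. 0 < r k" and f: "\<And>k. f k 0 = B k" "\<And>k. f k (r k) = B (Suc k)"
    and f_steps: "\<And>k i. i < r k \<Longrightarrow> f k i < f k (Suc i) \<and> indecomposable le (seg \<sigma> (f k i) (f k (Suc i)))"
    using indec_sum_chain[OF assms] by metis
  obtain p where p: "p 0 = B 0" "\<forall>k. \<exists>j. p j = B k"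
    and p_steps: "\<And>j. \<exists>k i. i < r k \<and> p j = f k i \<and> p (Suc j) = f k (Suc i)"
    using concat_chains[of r f] r f by metis
  have "p j < p (Suc j) \<and> indecomposable le (seg \<sigma> (p j) (p (Suc j))) \<and> (\<exists>k. p j < B k)" for j
  proof -
    obtain k i where "i < r k" "p j = f k i" "p (Suc j) = f k (Suc i)"
      using p_steps[of j] by blast
    moreover have "f k i < f k (r k)"
      using chain_less_last[of "r k" "f k" i] f_steps \<open>i < r k\<close> by blast
    ultimately show ?thesis using f_steps f(2) by metis
  qed
  then show ?thesis using p by (auto simp: strict_mono_Suc_iff)
qed

section \<open>Indecomposable final segments\<close>

lemma strict_mono_spread_subseq:
  fixes J :: "nat \<Rightarrow> nat"
  assumes "infinite A"
  obtains h :: "nat \<Rightarrow> nat" where "strict_mono h" "\<And>n. h n \<in> A" "\<And>l n. l < n \<Longrightarrow> J (h l) \<le> h n"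
proof -
  have "\<exists>i'. i' \<in> A \<and> i < i' \<and> (\<forall>l\<le>i. J l \<le> i')" for i
  proof -
    obtain b where "\<forall>l\<le>i. J l \<le> b"
      by (metis atMost_iff finite_atMost finite_imageI finite_nat_set_iff_bounded_le imageI)
    moreover have "\<not> (\<forall>n\<in>A. n \<le> max (Suc i) b)"
      using assms finite_nat_set_iff_bounded_le by blast
    then obtain i' where "max (Suc i) b < i'" "i' \<in> A" by (auto simp: not_le)
    ultimately show ?thesis by (intro exI[of _ i']) auto
  qed
  moreover have "\<exists>i. i \<in> A" using assms by (simp add: infinite_imp_nonempty ex_in_conv)
  ultimately have "\<exists>h. \<forall>n. h n \<in> A \<and> h n < h (Suc n) \<and> (\<forall>l\<le>h n. J l \<le> h (Suc n))"
    by (intro dependent_nat_choice[of "\<lambda>_ i. i \<in> A" "\<lambda>_ i i'. i < i' \<and> (\<forall>l\<le>i. J l \<le> i')",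
          simplified]) auto
  then obtain h where h: "\<And>n. h n \<in> A" "\<And>n. h n < h (Suc n)"
    and far: "\<And>n l. l \<le> h n \<Longrightarrow> J l \<le> h (Suc n)"
    by blast
  have "strict_mono h" using h(2) by (simp add: strict_mono_Suc_iff)
  moreover have "J (h l) \<le> h n" if "l < n" for l n
  proof -
    obtain n' where "n = Suc n'" "l \<le> n'" using \<open>l < n\<close> by (cases n) auto
    then show ?thesis using far \<open>strict_mono h\<close> by (simp add: strict_mono_less_eq)
  qed
  ultimately show ?thesis using h(1) that by blast
qed

text \<open>If no subsequence is bad, only finitely many terms embed into just finitely many
  later terms: infinitely many such terms would contain a bad subsequence.\<close>

lemma eventually_embeds_later:
  fixes x :: "nat \<Rightarrow> 'a"
  assumes good: "\<And>h :: nat \<Rightarrow> nat. strict_mono h \<Longrightarrow> \<exists>i j. i < j \<and> R (x (h i)) (x (h j))"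
  shows "\<exists>N. \<forall>i\<ge>N. \<forall>j. \<exists>k\<ge>j. R (x i) (x k)"
proof -
  define Bad where "Bad = {i. \<exists>j. \<forall>k\<ge>j. \<not> R (x i) (x k)}"
  define J where "J i = (SOME j. \<forall>k\<ge>j. \<not> R (x i) (x k))" for i
  have J: "\<not> R (x i) (x k)" if "i \<in> Bad" "J i \<le> k" for i k
  proof -
    from \<open>i \<in> Bad\<close> have "\<exists>j. \<forall>k\<ge>j. \<not> R (x i) (x k)" by (simp add: Bad_def)
    then have "\<forall>k\<ge>J i. \<not> R (x i) (x k)" unfolding J_def by (rule someI_ex)
    then show ?thesis using that(2) by blast
  qed
  have "finite Bad"
  proof (rule ccontr)
    assume "infinite Bad"
    then obtain h :: "nat \<Rightarrow> nat" where "strict_mono h" "\<And>n. h n \<in> Bad" "\<And>l n. l < n \<Longrightarrow> J (h l) \<le> h n"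
      by (rule strict_mono_spread_subseq[where J = J]) blast
    moreover obtain l n where "l < n" "R (x (h l)) (x (h n))"
      using good[OF \<open>strict_mono h\<close>] by blast
    ultimately show False using J by blast
  qed
  then obtain N where N: "\<forall>i\<in>Bad. i < N" by (auto simp: finite_nat_set_iff_bounded)
  have "\<forall>j. \<exists>k\<ge>j. R (x i) (x k)" if "N \<le> i" for i
  proof (rule ccontr)
    assume "\<not> (\<forall>j. \<exists>k\<ge>j. R (x i) (x k))"
    then have "i \<in> Bad" by (auto simp: Bad_def)
    then show False using N that by auto
  qed
  then show ?thesis by blast
qed

definition piece_index :: "(nat \<Rightarrow> ord) \<Rightarrow> ord \<Rightarrow> nat" where
  "piece_index p y = (LEAST j. y < p (Suc j))"

lemma piece_index:
  assumes "strict_mono p" "p N \<le> y" "y < p j"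
  shows "p (piece_index p y) \<le> y" "y < p (Suc (piece_index p y))" "N \<le> piece_index p y"
proof -
  have "y < p (Suc j)" using assms by (meson lessI order.strict_trans strict_mono_def)
  then show upper: "y < p (Suc (piece_index p y))"
    unfolding piece_index_def by (rule LeastI)
  show "p (piece_index p y) \<le> y"
  proof (cases "piece_index p y")
    case 0
    then show ?thesis using assms(1,2) strict_mono_less_eq[of p 0 N] by simp
  next
    case (Suc i)
    then have "\<not> y < p (Suc i)"
      using not_less_Least[of i "\<lambda>j. y < p (Suc j)"] by (simp add: piece_index_def)
    then show ?thesis using Suc by simp
  qed
  have "p N < p (Suc (piece_index p y))" using upper assms(2) by simp
  then show "N \<le> piece_index p y" using assms(1) by (simp add: strict_mono_less)
qed

lemma piece_index_mono:
  assumes "strict_mono p" "p N \<le> y" "y \<le> y'" "y' < p j"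
  shows "piece_index p y \<le> piece_index p y'"
proof -
  have "y < p j" using assms(3,4) by simp
  then have "p (piece_index p y) \<le> y'"
    using piece_index(1)[OF assms(1,2)] assms(3) by (meson order.trans)
  then show ?thesis using piece_index(3)[OF assms(1) _ assms(4)] by blast
qed

lemma glue_piece_maps:
  fixes p :: "nat \<Rightarrow> ord"
  assumes p: "strict_mono p" "\<And>j. p j < W" "\<And>y. y < W \<Longrightarrow> \<exists>j. y < p j"
    and G: "strict_mono G"
    and Fs_mono: "\<And>n y y'. p (N + n) \<le> y \<Longrightarrow> y < y' \<Longrightarrow> y' < p (Suc (N + n)) \<Longrightarrow> Fs n y < Fs n y'"
    and Fs_maps: "\<And>n y. p (N + n) \<le> y \<Longrightarrow> y < p (Suc (N + n)) \<Longrightarrow>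
      p (G n) \<le> Fs n y \<and> Fs n y < p (Suc (G n)) \<and> le (\<sigma> y) (\<sigma> (Fs n y))"
  obtains F where "\<And>y y'. p N \<le> y \<Longrightarrow> y < y' \<Longrightarrow> y' < W \<Longrightarrow> F y < F y'"
    "\<And>y. p N \<le> y \<Longrightarrow> y < W \<Longrightarrow> p (G 0) \<le> F y \<and> F y < W \<and> le (\<sigma> y) (\<sigma> (F y))"
proof -
  define J where "J = piece_index p"
  have J: "p (J y) \<le> y" "y < p (Suc (J y))" "N \<le> J y" if "p N \<le> y" "y < W" for y
    using p(3)[OF that(2)] piece_index[OF p(1) that(1)] unfolding J_def by blast+
  define F where "F y = Fs (J y - N) y" for y
  have F_maps: "p (G (J y - N)) \<le> F y \<and> F y < p (Suc (G (J y - N))) \<and> le (\<sigma> y) (\<sigma> (F y))"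
    if "p N \<le> y" "y < W" for y
    using Fs_maps[of "J y - N" y] J[OF that] by (simp add: F_def)
  have "F y < F y'" if "p N \<le> y" "y < y'" "y' < W" for y y'
  proof -
    have y': "p N \<le> y'" "y < W" using that by auto
    have "J y \<le> J y'"
      using p(3)[OF that(3)] piece_index_mono[OF p(1) that(1) less_imp_le[OF that(2)]]
      unfolding J_def by blast
    then consider "J y = J y'" | "J y < J y'" by linarith
    then show ?thesis
    proof cases
      case 1
      then show ?thesis
        using Fs_mono[of "J y - N" y y'] J[OF that(1) \<open>y < W\<close>] J[OF y'(1) that(3)] that(2)
        by (simp add: F_def)
    next
      case 2
      then have "Suc (G (J y - N)) \<le> G (J y' - N)"
        using J[OF that(1) \<open>y < W\<close>] J[OF y'(1) that(3)] G
        by (simp add: Suc_le_eq strict_mono_less diff_less_mono)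
      then have "p (Suc (G (J y - N))) \<le> p (G (J y' - N))"
        using p(1) by (simp add: strict_mono_less_eq)
      then show ?thesis
        using F_maps[OF that(1) \<open>y < W\<close>] F_maps[OF y'(1) that(3)] by (meson order.strict_trans2 order.trans)
    qed
  qed
  moreover have "p (G 0) \<le> F y \<and> F y < W \<and> le (\<sigma> y) (\<sigma> (F y))" if "p N \<le> y" "y < W" for y
  proof -
    have "p (G 0) \<le> p (G (J y - N))"
      using G p(1) by (simp add: strict_mono_less_eq)
    then show ?thesis
      using F_maps[OF that] p(2) by (meson order.trans order.strict_trans)
  qed
  ultimately show ?thesis using that by blast
qed

lemma emb_final_segment:
  assumes p: "strict_mono p" "\<And>j. p j < W" "\<And>y. y < W \<Longrightarrow> \<exists>j. y < p j"
    and G: "strict_mono G" "e \<le> p (G 0)"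
    and pieces: "\<And>n. emb le (seg \<sigma> (p (N + n)) (p (Suc (N + n)))) (seg \<sigma> (p (G n)) (p (Suc (G n))))"
  shows "emb le (seg \<sigma> (p N) W) (seg \<sigma> e W)"
proof -
  have "\<exists>F. (\<forall>y y'. p (N + n) \<le> y \<longrightarrow> y < y' \<longrightarrow> y' < p (Suc (N + n)) \<longrightarrow> F y < F y') \<and>
      (\<forall>y. p (N + n) \<le> y \<longrightarrow> y < p (Suc (N + n)) \<longrightarrow>
        p (G n) \<le> F y \<and> F y < p (Suc (G n)) \<and> le (\<sigma> y) (\<sigma> (F y)))" for n
    using p(1) by (intro emb_seg_index_map[OF pieces[of n]]) (simp_all add: strict_mono_less_eq)
  then obtain Fs where Fs: "\<forall>n. (\<forall>y y'. p (N + n) \<le> y \<longrightarrow> y < y' \<longrightarrow> y' < p (Suc (N + n)) \<longrightarrow> Fs n y < Fs n y') \<and>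
      (\<forall>y. p (N + n) \<le> y \<longrightarrow> y < p (Suc (N + n)) \<longrightarrow>
        p (G n) \<le> Fs n y \<and> Fs n y < p (Suc (G n)) \<and> le (\<sigma> y) (\<sigma> (Fs n y)))"
    by (metis choice)
  obtain F where F_mono: "\<And>y y'. p N \<le> y \<Longrightarrow> y < y' \<Longrightarrow> y' < W \<Longrightarrow> F y < F y'"
    and F_maps: "\<And>y. p N \<le> y \<Longrightarrow> y < W \<Longrightarrow> p (G 0) \<le> F y \<and> F y < W \<and> le (\<sigma> y) (\<sigma> (F y))"
    by (rule glue_piece_maps[OF p G(1), where Fs = Fs and le = le and \<sigma> = \<sigma>]) (use Fs in blast)+
  show ?thesis
  proof (rule emb_segI[where F = F])
    show "p N \<le> W" using p(2)[of N] by simp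
    show "e \<le> F y \<and> F y < W \<and> le (\<sigma> y) (\<sigma> (F y))" if "p N \<le> y" "y < W" for y
      using F_maps[OF that] G(2) by (meson order.trans)
    from this[of "p N"] show "e \<le> W" using p(2)[of N] by auto
  qed (rule F_mono)
qed

lemma indecomposable_final_segment:
  assumes p: "strict_mono p" "\<And>j. p j < oomega m" "\<And>y. y < oomega m \<Longrightarrow> \<exists>j. y < p j"
    and good: "\<And>h :: nat \<Rightarrow> nat. strict_mono h \<Longrightarrow> \<exists>i j. i < j \<and>
      emb le (seg \<sigma> (p (h i)) (p (Suc (h i)))) (seg \<sigma> (p (h j)) (p (Suc (h j))))"
  shows "\<exists>c < oomega m. indecomposable le (seg \<sigma> c (oomega m))"
proof -
  define piece where "piece j = seg \<sigma> (p j) (p (Suc j))" for j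
  have "\<exists>N. \<forall>i\<ge>N. \<forall>j. \<exists>k\<ge>j. emb le (piece i) (piece k)"
    by (rule eventually_embeds_later) (use good in \<open>simp add: piece_def\<close>)
  then obtain N where N: "\<And>i j. N \<le> i \<Longrightarrow> \<exists>k\<ge>j. emb le (piece i) (piece k)" by blast
  have "indecomposable le (seg \<sigma> (p N) (oomega m))"
    unfolding indecomposable_def fst_seg_omega[OF p(2)]
  proof (intro allI impI)
    fix d assume d: "0 < d \<and> d < oomega m"
    define e where "e = oadd (p N) d"
    have "e < oomega m" using d p(2) by (simp add: e_def oadd_less_omega)
    then obtain M where "e < p M" using p(3) by blast
    have "\<exists>G. \<forall>n. (M \<le> G n \<and> emb le (piece (N + n)) (piece (G n))) \<and> G n < G (Suc n)"
    proof (rule dependent_nat_choice)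
      show "\<exists>g. M \<le> g \<and> emb le (piece (N + 0)) (piece g)" using N[of N M] by auto
      fix g n
      obtain g' where "Suc (max g M) \<le> g'" "emb le (piece (N + Suc n)) (piece g')"
        using N[of "N + Suc n" "Suc (max g M)"] by auto
      then show "\<exists>g'. (M \<le> g' \<and> emb le (piece (N + Suc n)) (piece g')) \<and> g < g'"
        by (intro exI[of _ g']) auto
    qed
    then obtain G where G: "\<And>n. M \<le> G n" "\<And>n. emb le (piece (N + n)) (piece (G n))" "strict_mono G"
      by (auto simp: strict_mono_Suc_iff)
    have "e \<le> p (G 0)"
      using \<open>e < p M\<close> G(1)[of 0] p(1) strict_mono_less_eq[of p M "G 0"] by simp
    then have "emb le (seg \<sigma> (p N) (oomega m)) (seg \<sigma> e (oomega m))"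
      using emb_final_segment[OF p G(3)] G(2) unfolding piece_def by blast
    moreover have "tail d (seg \<sigma> (p N) (oomega m)) = seg \<sigma> e (oomega m)"
      using p(2)[of N] \<open>e < oomega m\<close> by (simp add: tail_seg e_def)
    ultimately show "emb le (seg \<sigma> (p N) (oomega m)) (tail d (seg \<sigma> (p N) (oomega m)))"
      by simp
  qed
  then show ?thesis using p(2) by blast
qed

section \<open>Induction on the exponent\<close>

lemma seg_in_iF:
  assumes "finite (range \<sigma>)" "range \<sigma> \<subseteq> P" "a < b" "b < W" "indecomposable le (seg \<sigma> a b)"
  shows "seg \<sigma> a b \<in> iF le P W"
proof -
  have "0 < osub a b" using assms(3) by (rule osub_pos)
  moreover have "osub a b < W"
    using assms(3,4) osub_le[of a b] by (meson order.strict_implies_order order.strict_trans1)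
  ultimately show ?thesis
    using assms finite_range_seg by (auto simp: iF_def sF_def seqs_over_def seg_def)
qed

lemma iF_mono: "W \<le> W' \<Longrightarrow> iF le P W \<subseteq> iF le P W'"
  by (auto simp: iF_def sF_def)

definition has_indec_tail :: "('q \<Rightarrow> 'q \<Rightarrow> bool) \<Rightarrow> ord \<Rightarrow> bool" where
  "has_indec_tail le W \<longleftrightarrow>
     (\<forall>\<sigma> :: ord \<Rightarrow> 'q. finite (range \<sigma>) \<longrightarrow> (\<exists>c<W. indecomposable le (seg \<sigma> c W)))"

definition indec_decomposable :: "('q \<Rightarrow> 'q \<Rightarrow> bool) \<Rightarrow> ord \<Rightarrow> bool" where
  "indec_decomposable le W \<longleftrightarrow>
     (\<forall>(\<sigma> :: ord \<Rightarrow> 'q) \<gamma>. finite (range \<sigma>) \<longrightarrow> 0 < \<gamma> \<longrightarrow> \<gamma> < W \<longrightarrow> indec_sum le \<sigma> 0 \<gamma>)"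

lemma has_indec_tail_step:
  fixes le :: "'q \<Rightarrow> 'q \<Rightarrow> bool"
  assumes dec: "indec_decomposable le (oomega (Suc m))"
    and good: "\<And>R x. finite R \<Longrightarrow> (\<And>i :: nat. x i \<in> iF le R (oomega (Suc m))) \<Longrightarrow>
      \<exists>i j. i < j \<and> emb le (x i) (x j)"
  shows "has_indec_tail le (oomega (Suc m))"
  unfolding has_indec_tail_def
proof (intro allI impI)
  fix \<sigma> :: "ord \<Rightarrow> 'q" assume fin: "finite (range \<sigma>)"
  define B where "B k = replicate_mset k m" for k
  have blocks: "indec_sum le \<sigma> (B k) (B (Suc k))" for k
  proof -
    have "finite (range (\<lambda>x. \<sigma> (oadd (B k) x)))"
      using fin by (rule finite_subset[rotated]) auto
    then have "indec_sum le (\<lambda>x. \<sigma> (oadd (B k) x)) 0 (oomega m)"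
      using dec by (simp add: indec_decomposable_def oomega_def)
    from indec_sum_shift[OF this] show ?thesis
      by (simp add: B_def oadd_replicate_mset_omega)
  qed
  obtain p where p: "strict_mono p" "\<forall>k. \<exists>j. p j = B k" "\<forall>j. \<exists>k. p j < B k"
    and pieces: "\<forall>j. indecomposable le (seg \<sigma> (p j) (p (Suc j)))"
    using indec_sum_sequence[where B = B, OF blocks] by blast
  have below: "p j < oomega (Suc m)" for j
    using p(3) replicate_mset_less_omega_Suc unfolding B_def by (meson order.strict_trans)
  have cofinal: "\<exists>j. y < p j" if "y < oomega (Suc m)" for y
  proof -
    obtain j where "p j = B (Suc (size y))" using p(2) by blast
    then have "y < p j" using less_omega_Suc_imp_less_replicate_mset[OF that] by (simp add: B_def)
    then show ?thesis by blast
  qed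
  have "seg \<sigma> (p j) (p (Suc j)) \<in> iF le (range \<sigma>) (oomega (Suc m))" for j
    using fin pieces below p(1) by (intro seg_in_iF) (auto simp: strict_mono_Suc_iff)
  then have good_pieces: "\<exists>i j. i < j \<and>
      emb le (seg \<sigma> (p (h i)) (p (Suc (h i)))) (seg \<sigma> (p (h j)) (p (Suc (h j))))" for h :: "nat \<Rightarrow> nat"
    using good[OF fin, of "\<lambda>i. seg \<sigma> (p (h i)) (p (Suc (h i)))"] by blast
  show "\<exists>c<oomega (Suc m). indecomposable le (seg \<sigma> c (oomega (Suc m)))"
    by (rule indecomposable_final_segment[OF p(1) below cofinal good_pieces])
qed

lemma indec_sum_omega:
  assumes "has_indec_tail le (oomega m)" "indec_decomposable le (oomega m)" "finite (range \<sigma>)"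
  shows "indec_sum le \<sigma> 0 (oomega m)"
proof -
  obtain c where c: "c < oomega m" "indecomposable le (seg \<sigma> c (oomega m))"
    using assms(1,3) by (auto simp: has_indec_tail_def)
  then have last: "indec_sum le \<sigma> c (oomega m)" by (rule indec_sum.single)
  show ?thesis
  proof (cases "c = 0")
    case False
    then have "indec_sum le \<sigma> 0 c"
      using assms(2,3) c(1) by (simp add: indec_decomposable_def)
    then show ?thesis using last by (rule indec_sum.trans)
  qed (use last in simp)
qed

lemma indec_decomposable_step:
  fixes le :: "'q \<Rightarrow> 'q \<Rightarrow> bool"
  assumes tail: "has_indec_tail le (oomega m)" and dec: "indec_decomposable le (oomega m)"
  shows "indec_decomposable le (oomega (Suc m))"
  unfolding indec_decomposable_def
proof (intro allI impI)
  fix \<sigma> :: "ord \<Rightarrow> 'q" and \<gamma>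
  assume "finite (range \<sigma>)" "0 < \<gamma>" "\<gamma> < oomega (Suc m)"
  then show "indec_sum le \<sigma> 0 \<gamma>"
  proof (induction "count \<gamma> m" arbitrary: \<sigma> \<gamma>)
    \<comment> \<open>count \<gamma> m is the number of leading summands omega^m of \<gamma>;
      they are split off one by one\<close>
    case 0
    then have "\<gamma> < oomega m"
      by (auto simp: oomega_def less_Suc_eq not_in_iff[symmetric] simp del: not_in_iff)
    then show ?case using dec 0 by (simp add: indec_decomposable_def)
  next
    case (Suc k)
    define \<gamma>' where "\<gamma>' = \<gamma> - {#m#}"
    have "m \<in># \<gamma>" using Suc.hyps(2) by (metis count_inI nat.distinct(1))
    then have \<gamma>: "\<gamma> = add_mset m \<gamma>'" by (simp add: \<gamma>'_def)
    have \<gamma>'_le: "\<forall>x\<in>#\<gamma>'. x \<le> m" using Suc.prems(3) by (auto simp: \<gamma> oomega_def less_Suc_eq_le)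
    show ?case
    proof (cases "\<gamma>' = 0")
      case True
      then show ?thesis using indec_sum_omega[OF tail dec Suc.prems(1)] by (simp add: \<gamma> oomega_def)
    next
      case False
      have "oadd (oomega m) \<gamma>' = \<gamma>"
        using False \<gamma>'_le by (simp add: oadd_nonzero oomega_def \<gamma>)
      moreover have "finite (range (\<lambda>x. \<sigma> (oadd (oomega m) x)))"
        using Suc.prems(1) by (rule finite_subset[rotated]) auto
      moreover have "count \<gamma>' m = k" "0 < \<gamma>'" "\<gamma>' < oomega (Suc m)"
        using Suc.hyps(2) False \<gamma>'_le by (auto simp: \<gamma> oomega_def less_Suc_eq_le)
      ultimately have "indec_sum le \<sigma> (oomega m) \<gamma>"
        using Suc.hyps(1) indec_sum_shift[of le \<sigma> "oomega m" 0 \<gamma>'] by simp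
      then show ?thesis
        using indec_sum_omega[OF tail dec Suc.prems(1)] by (rule indec_sum.trans[rotated])
    qed
  qed
qed

lemma emb_map_iff:
  assumes "inj_on g R" "\<forall>i<fst s. snd s i \<in> R" "\<forall>i<fst t. snd t i \<in> R"
  shows "emb (\<lambda>a b. le (inv_into R g a) (inv_into R g b)) (fst s, g \<circ> snd s) (fst t, g \<circ> snd t)
    \<longleftrightarrow> emb le s t"
proof -
  have inv: "\<And>i. i < fst s \<Longrightarrow> inv_into R g (g (snd s i)) = snd s i"
    "\<And>i. i < fst t \<Longrightarrow> inv_into R g (g (snd t i)) = snd t i"
    using assms by (simp_all add: inv_into_f_f)
  then have "(\<forall>i<fst s. f i < fst t \<and> le (inv_into R g (g (snd s i))) (inv_into R g (g (snd t (f i)))))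
      \<longleftrightarrow> (\<forall>i<fst s. f i < fst t \<and> le (snd s i) (snd t (f i)))" for f
    by auto
  then show ?thesis unfolding emb_def by simp
qed

lemma indecomposable_map_iff:
  assumes "inj_on g R" "\<forall>i<fst s. snd s i \<in> R"
  shows "indecomposable (\<lambda>a b. le (inv_into R g a) (inv_into R g b)) (fst s, g \<circ> snd s)
    \<longleftrightarrow> indecomposable le s"
proof -
  have "emb (\<lambda>a b. le (inv_into R g a) (inv_into R g b)) (fst s, g \<circ> snd s) (tail d (fst s, g \<circ> snd s))
      \<longleftrightarrow> emb le s (tail d s)" if "d < fst s" for d
  proof -
    have "\<forall>i<fst (tail d s). snd (tail d s) i \<in> R"
      using assms(2) that by (simp add: tail_def less_osub_iff)
    then show ?thesis
      using emb_map_iff[OF assms(1,2), of "tail d s"] by (simp add: tail_def comp_def)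
  qed
  then show ?thesis unfolding indecomposable_def by auto
qed

text \<open>The hypothesis is only available for subsets of nat; a finite set of values is
  transported there by an injection.\<close>

lemma good_seq_in_iF:
  fixes le :: "'q \<Rightarrow> 'q \<Rightarrow> bool"
  assumes hyp: "\<And>(P :: nat set) (leP :: nat \<Rightarrow> nat \<Rightarrow> bool).
      finite P \<Longrightarrow> qo_on P leP \<Longrightarrow> wqo_on (iF leP P W) (emb leP)"
    and Q: "qo_on UNIV le" and R: "finite R" and x: "\<And>i :: nat. x i \<in> iF le R W"
  shows "\<exists>i j. i < j \<and> emb le (x i) (x j)"
proof -
  obtain g :: "'q \<Rightarrow> nat" where g: "inj_on g R"
    using finite_imp_inj_to_nat_seg[OF R] by blast
  define leP where "leP = (\<lambda>a b. le (inv_into R g a) (inv_into R g b))"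
  define y where "y i = (fst (x i), g \<circ> snd (x i))" for i
  have vals: "\<forall>k<fst (x i). snd (x i) k \<in> R" for i
    using x[of i] by (auto simp: iF_def sF_def seqs_over_def)
  have "qo_on (g ` R) leP"
    using Q by (auto simp: qo_on_def leP_def)
  then have "wqo_on (iF leP (g ` R) W) (emb leP)"
    using hyp[OF finite_imageI[OF R]] by blast
  moreover have "y i \<in> iF leP (g ` R) W" for i
  proof -
    have "finite_range (y i)"
      unfolding finite_range_def by (rule finite_subset[of _ "g ` R"]) (use vals R in \<open>auto simp: y_def\<close>)
    then show ?thesis
      using x[of i] vals[of i] indecomposable_map_iff[OF g vals[of i]]
      by (auto simp: iF_def sF_def seqs_over_def y_def leP_def)
  qed
  ultimately obtain i j where "i < j" "emb leP (y i) (y j)"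
    unfolding wqo_on_def by blast
  then show ?thesis
    using emb_map_iff[OF g vals[of i] vals[of j]] by (auto simp: y_def leP_def)
qed

lemma has_indec_tail_indec_decomposable:
  fixes le :: "'q \<Rightarrow> 'q \<Rightarrow> bool"
  assumes good: "\<And>R x. finite R \<Longrightarrow> (\<And>i :: nat. x i \<in> iF le R (oomega n)) \<Longrightarrow>
      \<exists>i j. i < j \<and> emb le (x i) (x j)"
  shows "m \<le> n \<Longrightarrow> has_indec_tail le (oomega m) \<and> indec_decomposable le (oomega (Suc m))"
proof (induction m)
  case 0
  have "indecomposable le (seg \<sigma> 0 (oomega 0))" for \<sigma> :: "ord \<Rightarrow> 'q"
    by (auto simp: indecomposable_def seg_0 oomega_def)
  then have "has_indec_tail le (oomega 0)"
    by (auto simp: has_indec_tail_def oomega_def)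
  moreover have "indec_decomposable le (oomega 0)"
    by (auto simp: indec_decomposable_def oomega_def)
  ultimately show ?case by (blast intro: indec_decomposable_step)
next
  case (Suc m)
  then have dec: "indec_decomposable le (oomega (Suc m))" by simp
  have "oomega (Suc m) \<le> oomega n"
    unfolding oomega_def using Suc.prems by (cases "Suc m = n") simp_all
  then have "has_indec_tail le (oomega (Suc m))"
    using has_indec_tail_step[OF dec] good iF_mono by (metis subsetD)
  then show ?case using dec by (blast intro: indec_decomposable_step)
qed

definition extend_seq :: "'q tseq \<Rightarrow> ord \<Rightarrow> 'q" where
  "extend_seq s i = (if i < fst s then snd s i else snd s 0)"

lemma finite_range_extend_seq:
  assumes "fst s \<noteq> 0" "finite_range s"
  shows "finite (range (extend_seq s))"
proof -
  have "range (extend_seq s) \<subseteq> snd s ` {i. i < fst s}"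
    using le_multiset_empty_left[OF assms(1)] by (auto simp: extend_seq_def)
  then show ?thesis using assms(2) finite_subset unfolding finite_range_def by blast
qed

lemma seq_eq_seg_extend_seq: "seq_eq s (seg (extend_seq s) 0 (fst s))"
  by (simp add: seg_0 seq_eq_def extend_seq_def)

lemma sF_eq_indec_or_split:
  assumes tail: "has_indec_tail le (oomega n)" and s: "s \<in> sF_eq UNIV (oomega n)"
  shows "s \<in> iF_eq le UNIV (oomega n) \<or>
    (\<exists>s0 s1. s0 \<in> sF UNIV (oomega n) \<and> s1 \<in> iF_eq le UNIV (oomega n) \<and> seq_eq s (concat s0 s1))"
proof -
  define \<sigma> where "\<sigma> = extend_seq s"
  have len: "fst s = oomega n" using s by (simp add: sF_eq_def)
  have fin: "finite (range \<sigma>)"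
    using s unfolding \<sigma>_def by (intro finite_range_extend_seq) (auto simp: sF_eq_def seqs_over_def)
  obtain c where c: "c < oomega n" "indecomposable le (seg \<sigma> c (oomega n))"
    using tail fin by (auto simp: has_indec_tail_def)
  have s_eq: "seq_eq s (seg \<sigma> 0 (oomega n))"
    using seq_eq_seg_extend_seq[of s] len by (simp add: \<sigma>_def)
  have tail_in: "seg \<sigma> c (oomega n) \<in> iF_eq le UNIV (oomega n)"
    using c(2) finite_range_seg[OF fin] fst_seg_omega[OF c(1), of \<sigma>]
    by (simp add: iF_eq_def sF_eq_def seqs_over_def oomega_def)
  show ?thesis
  proof (cases "c = 0")
    case True
    then have "indecomposable le s"
      using c(2) indecomposable_cong[OF seq_eq_sym[OF s_eq]] by simp
    then show ?thesis using s by (simp add: iF_eq_def)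
  next
    case False
    have "seg \<sigma> 0 c \<in> sF UNIV (oomega n)"
      using False c(1) finite_range_seg[OF fin, of 0 c] by (simp add: sF_def seqs_over_def seg_0)
    moreover have "seq_eq (seg \<sigma> 0 (oomega n)) (concat (seg \<sigma> 0 c) (seg \<sigma> c (oomega n)))"
      using c(1) by (intro seg_concat) auto
    with s_eq have "seq_eq s (concat (seg \<sigma> 0 c) (seg \<sigma> c (oomega n)))"
      by (rule seq_eq_trans)
    ultimately show ?thesis using tail_in by blast
  qed
qed

lemma sF_concat_list_iF:
  assumes dec: "indec_decomposable le W" and s: "s \<in> sF UNIV W"
  shows "\<exists>ss. ss \<noteq> [] \<and> (\<forall>t\<in>set ss. t \<in> iF le UNIV W) \<and> seq_eq s (concat_list ss)"
proof -
  define \<sigma> where "\<sigma> = extend_seq s"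
  have len: "0 < fst s" "fst s < W"
    using s le_multiset_empty_left by (auto simp: sF_def seqs_over_def)
  have fin: "finite (range \<sigma>)"
    using s unfolding \<sigma>_def by (intro finite_range_extend_seq) (auto simp: sF_def seqs_over_def)
  have "indec_sum le \<sigma> 0 (fst s)"
    using dec fin len by (simp add: indec_decomposable_def)
  then obtain ss where "ss \<noteq> []"
    and ss: "\<forall>t\<in>set ss. \<exists>c d. 0 \<le> c \<and> c < d \<and> d \<le> fst s \<and> t = seg \<sigma> c d \<and> indecomposable le t"
    and "seq_eq (seg \<sigma> 0 (fst s)) (concat_list ss)"
    using indec_sum_concat_list by blast
  moreover have "t \<in> iF le UNIV W" if "t \<in> set ss" for t
    using ss that fin len(2) seg_in_iF[of \<sigma> UNIV] by (fastforce intro: order.strict_trans1)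
  ultimately show ?thesis
    using seq_eq_trans[OF seq_eq_seg_extend_seq[of s]] unfolding \<sigma>_def by blast
qed

theorem proposition4p22:
  fixes n :: nat and le :: "'q \<Rightarrow> 'q \<Rightarrow> bool"
  assumes hyp: "\<And>(P :: nat set) (leP :: nat \<Rightarrow> nat \<Rightarrow> bool).
                  finite P \<Longrightarrow> qo_on P leP \<Longrightarrow> wqo_on (iF leP P (oomega n)) (emb leP)"
    and Q: "qo_on UNIV le"
  shows "(\<forall>s \<in> sF_eq UNIV (oomega n).
            s \<in> iF_eq le UNIV (oomega n) \<or>
            (\<exists>s0 s1. s0 \<in> sF UNIV (oomega n) \<and> s1 \<in> iF_eq le UNIV (oomega n) \<and>
                     seq_eq s (concat s0 s1)))
       \<and> (\<forall>s \<in> sF UNIV (oomega (Suc n)).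
            \<exists>ss. ss \<noteq> [] \<and> (\<forall>t \<in> set ss. t \<in> iF le UNIV (oomega (Suc n))) \<and>
                 seq_eq s (concat_list ss))"
proof -
  have "\<exists>i j. i < j \<and> emb le (x i) (x j)"
    if "finite R" "\<And>i :: nat. x i \<in> iF le R (oomega n)" for R x
    using good_seq_in_iF[OF hyp Q that] .
  then have "has_indec_tail le (oomega n) \<and> indec_decomposable le (oomega (Suc n))"
    by (rule has_indec_tail_indec_decomposable[OF _ order_refl])
  then show ?thesis
    using sF_eq_indec_or_split sF_concat_list_iF by blast
qed

end
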